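(* Let $k\ge1$. Suppose the density of the set of trajectories at time $k-1$ is a trajectory MBM with $n_{k-1|k-1}$ tracks, track $i$ having $h^i_{k-1|k-1}$ hypotheses with parameters $(w^{i,a^i}_{k-1|k-1}, r^{i,a^i}_{k-1|k-1}, f^{i,a^i}_{k-1|k-1})$ and histories $\mathcal{M}^{k-1}(i,a^i)$. Suppose each trajectory evolves according to the transition model for the set of all trajectories and new trajectories are born according to an independent trajectory multi-Bernoulli RFS with $n^b_k$ components with parameters $(r^{b,l}_k,f^{B,l}_k)$. Then the predicted density at time $k$ is a trajectory MBM with $n_{k|k-1}=n_{k-1|k-1}+n^b_k$ tracks, where for $i\in\{1,\dots,n_{k-1|k-1}\}$: $h^i_{k|k-1}=h^i_{k-1|k-1}$, histories unchanged, and for all $a^i$, $w^{i,a^i}_{k|k-1}=w^{i,a^i}_{k-1|k-1}$, $r^{i,a^i}_{k|k-1}=r^{i,a^i}_{k-1|k-1}$, $f^{i,a^i}_{k|k-1}(X)=\int\pi^a(X|X')f^{i,a^i}_{k-1|k-1}(X')dX'$; and for new tracks $i=n_{k-1|k-1}+l$: $h^i_{k|k-1}=1$, $\mathcal{M}^{k-1}(i,1)=\emptyset$, $w^{i,1}_{k|k-1}=1$, $r^{i,1}_{k|k-1}=r^{b,l}_k$, $f^{i,1}_{k|k-1}=f^{B,l}_k$. Global hypotheses are the old ones extended by $a^i=1$ on new tracks.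
   Context: Single target state space $\mathcal{X}=\mathbb{R}^n$. A trajectory is $X=(\beta,\varepsilon,x_{\beta:\varepsilon})$ with integers $0\le\beta\le\varepsilon\le k$ and $x_{\beta:\varepsilon}\in\mathcal{X}^{\varepsilon-\beta+1}$; trajectory space $\mathcal{T}_k=\biguplus_{0\le\beta\le\varepsilon\le k}\{\beta\}\times\{\varepsilon\}\times\mathcal{X}^{\varepsilon-\beta+1}$, $\int p(X)dX=\sum_{(\beta,\varepsilon)}\int p(\beta,\varepsilon,x_{\beta:\varepsilon})dx_{\beta:\varepsilon}$. $\Delta_a(b)$ is the Kronecker delta, $\delta$ the Dirac delta. A Bernoulli density with parameters $(r,f)$ is $1-r$ at $\emptyset$, $rf(X)$ at $\{X\}$, $0$ otherwise. A trajectory MBM with track table $\mathbb{T}=\{1,\dots,n\}$, track $i$ having hypotheses $a^i\in\{1,\dots,h^i\}$ each with weight $w^{i,a^i}$, Bernoulli parameters $(r^{i,a^i},f^{i,a^i})$ and measurement history $\mathcal{M}(i,a^i)$ (a set of pairs $(\tau,j)$, at most one per time $\tau$), is the density $f(\mathbf{X})=\sum_{a\in\mathcal{A}}w^a\sum_{\uplus_{i}\mathbf{X}^i=\mathbf{X}}\prod_{i}f^{i,a^i}(\mathbf{X}^i)$, with $f^{i,a^i}(\cdot)$ the Bernoulli density with parameters $(r^{i,a^i},f^{i,a^i})$, $\mathcal{A}$ the set of $a=(a^1,\dots,a^n)$ with pairwise disjoint histories (subsets of the received measurement indices), and $w^a\propto\prod_iw^{i,a^i}$. Transition model for the set of all trajectories: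 each trajectory $X'$ at time $k-1$ remains in the set with probability one and becomes $X$ with density $\pi^a(X|X')=\pi^{a,x}(x_{\beta:\varepsilon}|\beta,\varepsilon,X')\pi^\varepsilon(\varepsilon|\beta,X')\Delta_{\beta'}(\beta)$, where $\pi^\varepsilon(\varepsilon|\beta,X')$ equals $1$ if $\varepsilon=\varepsilon'<k-1$, $1-P^S_{k-1}(X')$ if $\varepsilon=\varepsilon'=k-1$, $P^S_{k-1}(X')$ if $\varepsilon=\varepsilon'+1=k$, and $0$ otherwise, with $P^S_{k-1}(X')=P^S(x'_{\varepsilon'})\Delta_{k-1}(\varepsilon')$; and $\pi^{a,x}=\delta_{x'_{\beta':\varepsilon'}}(x_{\beta:\varepsilon})$ if $\varepsilon=\varepsilon'$, $\pi^{a,x}=\pi^x(x_\varepsilon|x'_{\varepsilon'})\delta_{x'_{\beta':\varepsilon'}}(x_{\beta:\varepsilon-1})$ if $\varepsilon=\varepsilon'+1$, $\pi^x$ the single-target Markov transition density. Trajectories evolve independently. Birth densities: $f^{B,l}_k(X)=f^{b,l}_k(x_k)\Delta_k(\beta)\Delta_k(\varepsilon)$. *)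

theory Defs
  imports "HOL-Analysis.Analysis"
begin

text \<open>A trajectory X = (beta, epsilon, x_{beta:epsilon}); the states are stored as a list,
  the state at time t being the (t - beta)-th entry.\<close>

datatype 'x traj = Traj (tbeg: nat) (tend: nat) (tstates: "'x list")

definition st :: "'x traj \<Rightarrow> nat \<Rightarrow> 'x" where
  "st X t = tstates X ! (t - tbeg X)"

definition traj_space :: "nat \<Rightarrow> 'x traj set" where
  "traj_space k = {X. tbeg X \<le> tend X \<and> tend X \<le> k \<and> length (tstates X) = tend X - tbeg X + 1}"

section \<open>Bernoulli, multi-Bernoulli and MBM densities (on lists = labelled points of a finite set)\<close>

definition bern_dens :: "real \<Rightarrow> ('x traj \<Rightarrow> ennreal) \<Rightarrow> 'x traj list \<Rightarrow> ennreal" where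
  "bern_dens r f Ys = (case Ys of [] \<Rightarrow> ennreal (1 - r) | [X] \<Rightarrow> ennreal r * f X | _ \<Rightarrow> 0)"

text \<open>Multi-Bernoulli density with components 1..n: the sum over all decompositions
  X = X^1 \<uplus> ... \<uplus> X^n (assignment c of each point of X to a component).\<close>
definition mb_dens :: "nat \<Rightarrow> (nat \<Rightarrow> real) \<Rightarrow> (nat \<Rightarrow> 'x traj \<Rightarrow> ennreal) \<Rightarrow> 'x traj list \<Rightarrow> ennreal" where
  "mb_dens n r f Xs =
     (\<Sum>c \<in> {..<length Xs} \<rightarrow>\<^sub>E {1..n}.
        \<Prod>i\<in>{1..n}. bern_dens (r i) (f i) [Xs ! j. j \<leftarrow> [0..<length Xs], c j = i])"

definition glob_hyps :: "nat \<Rightarrow> (nat \<Rightarrow> nat) \<Rightarrow> (nat \<Rightarrow> nat \<Rightarrow> (nat \<times> nat) set) \<Rightarrow> (nat \<Rightarrow> nat) set" where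
  "glob_hyps n h M = {a \<in> Pi\<^sub>E {1..n} (\<lambda>i. {1..h i}).
      \<forall>i\<in>{1..n}. \<forall>j\<in>{1..n}. i \<noteq> j \<longrightarrow> M i (a i) \<inter> M j (a j) = {}}"

definition glob_weight ::
  "nat \<Rightarrow> (nat \<Rightarrow> nat) \<Rightarrow> (nat \<Rightarrow> nat \<Rightarrow> real) \<Rightarrow> (nat \<Rightarrow> nat \<Rightarrow> (nat \<times> nat) set) \<Rightarrow> (nat \<Rightarrow> nat) \<Rightarrow> real" where
  "glob_weight n h w M a = (\<Prod>i\<in>{1..n}. w i (a i)) / (\<Sum>b\<in>glob_hyps n h M. \<Prod>i\<in>{1..n}. w i (b i))"

definition mbm_dens ::
  "nat \<Rightarrow> (nat \<Rightarrow> nat) \<Rightarrow> (nat \<Rightarrow> nat \<Rightarrow> real) \<Rightarrow> (nat \<Rightarrow> nat \<Rightarrow> real)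
   \<Rightarrow> (nat \<Rightarrow> nat \<Rightarrow> 'x traj \<Rightarrow> ennreal) \<Rightarrow> (nat \<Rightarrow> nat \<Rightarrow> (nat \<times> nat) set) \<Rightarrow> 'x traj list \<Rightarrow> ennreal" where
  "mbm_dens n h w r f M Xs =
     (\<Sum>a\<in>glob_hyps n h M. ennreal (glob_weight n h w M a) *
         mb_dens n (\<lambda>i. r i (a i)) (\<lambda>i. f i (a i)) Xs)"

definition PS_traj :: "nat \<Rightarrow> ('x \<Rightarrow> real) \<Rightarrow> 'x traj \<Rightarrow> real" where
  "PS_traj k PS X' = (if tend X' = k - 1 then PS (st X' (tend X')) else 0)"

definition pi_eps :: "nat \<Rightarrow> ('x \<Rightarrow> real) \<Rightarrow> nat \<Rightarrow> 'x traj \<Rightarrow> real" where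
  "pi_eps k PS e X' =
     (if e = tend X' \<and> tend X' < k - 1 then 1
      else if e = tend X' \<and> tend X' = k - 1 then 1 - PS_traj k PS X'
      else if e = tend X' + 1 \<and> e = k then PS_traj k PS X'
      else 0)"

text \<open>pi^a(X|X') contains Dirac deltas delta_{x'}(.) in the state sequence. We represent it by
  the coefficient of the Dirac delta: integrating g(X') pi^a(X|X') dX' over X' is the sum over X'
  of g(X') times this coefficient (Dirac mass = point mass).\<close>
definition pi_coef :: "nat \<Rightarrow> ('x \<Rightarrow> real) \<Rightarrow> ('x \<Rightarrow> 'x \<Rightarrow> real) \<Rightarrow> 'x traj \<Rightarrow> 'x traj \<Rightarrow> real" where
  "pi_coef k PS pix X X' =
     (if tbeg X = tbeg X' then
        (if tend X = tend X' then
           (if tstates X = tstates X' then pi_eps k PS (tend X) X' else 0)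
         else if tend X = tend X' + 1 then
           (if butlast (tstates X) = tstates X'
            then pix (st X (tend X)) (st X' (tend X')) * pi_eps k PS (tend X) X' else 0)
         else 0)
      else 0)"

definition traj_pred :: "nat \<Rightarrow> ('x \<Rightarrow> real) \<Rightarrow> ('x \<Rightarrow> 'x \<Rightarrow> real) \<Rightarrow> ('x traj \<Rightarrow> ennreal) \<Rightarrow> 'x traj \<Rightarrow> ennreal" where
  "traj_pred k PS pix g X = (\<integral>\<^sup>+ X'. ennreal (pi_coef k PS pix X X') * g X' \<partial>count_space UNIV)"

text \<open>Transition of the surviving set (every trajectory stays in the set with probability one):
  T(Y|X') = sum over bijections of prod pi^a(Y_sigma(j)|X'_j) (Dirac coefficients).\<close>
definition surv_trans :: "nat \<Rightarrow> ('x \<Rightarrow> real) \<Rightarrow> ('x \<Rightarrow> 'x \<Rightarrow> real) \<Rightarrow> 'x traj list \<Rightarrow> 'x traj list \<Rightarrow> ennreal" where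
  "surv_trans k PS pix Ys Xs' =
     (if length Ys = length Xs' then
        (\<Sum>\<sigma>\<in>{\<sigma>. \<sigma> permutes {..<length Ys}}.
            \<Prod>j<length Ys. ennreal (pi_coef k PS pix (Ys ! \<sigma> j) (Xs' ! j)))
      else 0)"

definition set_trans :: "nat \<Rightarrow> ('x \<Rightarrow> real) \<Rightarrow> ('x \<Rightarrow> 'x \<Rightarrow> real) \<Rightarrow> ('x traj list \<Rightarrow> ennreal)
    \<Rightarrow> 'x traj list \<Rightarrow> 'x traj list \<Rightarrow> ennreal" where
  "set_trans k PS pix fbirth Xs Xs' =
     (\<Sum>S\<in>Pow {..<length Xs}. fbirth (nths Xs ({..<length Xs} - S)) * surv_trans k PS pix (nths Xs S) Xs')"

text \<open>Set integral  \<integral> G(X') \<delta>X' = sum_m 1/m! \<integral> G({X'_1,...,X'_m}) dX'_1...dX'_m,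
  for integrands G whose dependence on X' is through Dirac deltas (represented by coefficients).\<close>
definition set_int_dirac :: "('x traj list \<Rightarrow> ennreal) \<Rightarrow> ennreal" where
  "set_int_dirac G = (\<Sum>m. ennreal (1 / fact m) * (\<integral>\<^sup>+ Xs'. G Xs' \<partial>count_space {Xs'. length Xs' = m}))"

definition ck_pred :: "nat \<Rightarrow> ('x \<Rightarrow> real) \<Rightarrow> ('x \<Rightarrow> 'x \<Rightarrow> real) \<Rightarrow> ('x traj list \<Rightarrow> ennreal)
    \<Rightarrow> ('x traj list \<Rightarrow> ennreal) \<Rightarrow> 'x traj list \<Rightarrow> ennreal" where
  "ck_pred k PS pix fbirth fprev Xs = set_int_dirac (\<lambda>Xs'. set_trans k PS pix fbirth Xs Xs' * fprev Xs')"

definition birth_traj :: "nat \<Rightarrow> ('x \<Rightarrow> ennreal) \<Rightarrow> 'x traj \<Rightarrow> ennreal" where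
  "birth_traj k fb X = (if tbeg X = k \<and> tend X = k then fb (st X k) else 0)"

end

theory Submission
  imports Defs
begin

text \<open>Both sides are sums over the splittings of the points of X into surviving and newborn
  trajectories. For the surviving points, the Dirac transition kernel is a sum over the m!
  matchings with the previous points; under each matching the integral against a
  multi-Bernoulli density factorises over the points, replacing every local density f by its
  prediction \<integral> \<pi>(X|X') f(X') dX', and the m! matchings cancel the 1/m! of the set integral.
  For the newborn points, the birth density is exactly the contribution of the appended birth
  tracks, since every global hypothesis of the predicted MBM extends a unique old one.\<close>

text \<open>Bernoulli and multi-Bernoulli densities of the points x j, j \<in> J, for an arbitrary
  index set J instead of the positions of a list; this makes reindexing and splitting easy.\<close>

definition bern_set :: "real \<Rightarrow> ('a \<Rightarrow> ennreal) \<Rightarrow> nat set \<Rightarrow> (nat \<Rightarrow> 'a) \<Rightarrow> ennreal" where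
  "bern_set r f J x =
     (if J = {} then ennreal (1 - r) else if card J = 1 then ennreal r * f (x (the_elem J)) else 0)"

definition mb_set ::
  "nat \<Rightarrow> (nat \<Rightarrow> real) \<Rightarrow> (nat \<Rightarrow> 'a \<Rightarrow> ennreal) \<Rightarrow> nat set \<Rightarrow> (nat \<Rightarrow> 'a) \<Rightarrow> ennreal" where
  "mb_set n R F I x = (\<Sum>c \<in> I \<rightarrow>\<^sub>E {1..n}. \<Prod>i\<in>{1..n}. bern_set (R i) (F i) {j\<in>I. c j = i} x)"

lemma bern_dens_map_distinct:
  assumes "distinct js"
  shows "bern_dens r f (map x js) = bern_set r f (set js) x"
proof (cases js rule: remdups_adj.cases)
  case (3 a b t)
  then have "card (set js) \<ge> 2" using assms by (simp add: distinct_card)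
  then show ?thesis using 3 by (auto simp: bern_dens_def bern_set_def)
qed (simp_all add: bern_dens_def bern_set_def)

lemma mb_dens_eq_mb_set: "mb_dens n R F xs = mb_set n R F {..<length xs} (nth xs)"
  unfolding mb_dens_def mb_set_def
proof (intro sum.cong refl prod.cong)
  fix c :: "nat \<Rightarrow> nat" and i :: nat
  have comprehension: "[xs ! j. j \<leftarrow> js, c j = i] = map ((!) xs) (filter (\<lambda>j. c j = i) js)"
    for js by (induction js) auto
  have "set (filter (\<lambda>j. c j = i) [0..<length xs]) = {j\<in>{..<length xs}. c j = i}"
    by auto
  then show "bern_dens (R i) (F i) [xs ! j. j \<leftarrow> [0..<length xs], c j = i]
      = bern_set (R i) (F i) {j \<in> {..<length xs}. c j = i} ((!) xs)"
    unfolding comprehension bern_dens_map_distinct[OF distinct_filter[OF distinct_upt]] by simp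
qed

lemma bern_set_image:
  assumes "inj_on e J" "finite J"
  shows "bern_set r f (e ` J) x = bern_set r f J (x \<circ> e)"
proof (cases "card J = 1")
  case True
  then obtain j where "J = {j}" by (auto simp: card_1_singleton_iff)
  then show ?thesis by (simp add: bern_set_def)
next
  case False
  then show ?thesis using assms by (simp add: bern_set_def card_image)
qed

lemma mb_set_cong:
  assumes "\<And>i. i \<in> {1..n} \<Longrightarrow> R i = R' i" "\<And>i. i \<in> {1..n} \<Longrightarrow> F i = F' i"
    and "\<And>j. j \<in> I \<Longrightarrow> x j = y j" "finite I"
  shows "mb_set n R F I x = mb_set n R' F' I y"
proof -
  have "bern_set r g J x = bern_set r g J y" if "J \<subseteq> I" for r g J
    using that assms(3,4) by (auto simp: bern_set_def card_1_singleton_iff)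
  then show ?thesis
    unfolding mb_set_def using assms(1,2) by (intro sum.cong refl prod.cong) auto
qed

lemma mb_set_reindex:
  assumes e: "bij_betw e I' I" and fin: "finite I"
  shows "mb_set n R F I x = mb_set n R F I' (x \<circ> e)"
proof -
  define \<psi> where "\<psi> c = restrict (c \<circ> e) I'" for c :: "nat \<Rightarrow> nat"
  have fin': "finite I'" using e fin bij_betw_finite by blast
  have b: "bij_betw \<psi> (I \<rightarrow>\<^sub>E {1..n}) (I' \<rightarrow>\<^sub>E {1..n})"
  proof (rule bij_betwI[where g = "\<lambda>c'. restrict (c' \<circ> inv_into I' e) I"])
    show "\<psi> \<in> (I \<rightarrow>\<^sub>E {1..n}) \<rightarrow> (I' \<rightarrow>\<^sub>E {1..n})"
      using e by (auto simp: \<psi>_def bij_betw_def)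
    show "(\<lambda>c'. restrict (c' \<circ> inv_into I' e) I) \<in> (I' \<rightarrow>\<^sub>E {1..n}) \<rightarrow> (I \<rightarrow>\<^sub>E {1..n})"
      using e by (auto simp: bij_betw_def inv_into_into)
    fix c assume "c \<in> I \<rightarrow>\<^sub>E {1..n}"
    then show "restrict (\<psi> c \<circ> inv_into I' e) I = c"
      using e by (auto simp: \<psi>_def bij_betw_def fun_eq_iff inv_into_into f_inv_into_f
                              PiE_def extensional_def)
  next
    fix c assume "c \<in> I' \<rightarrow>\<^sub>E {1..n}"
    then show "\<psi> (restrict (c \<circ> inv_into I' e) I) = c"
      using e by (auto simp: \<psi>_def bij_betw_def fun_eq_iff PiE_def extensional_def)
  qed
  have "mb_set n R F I' (x \<circ> e)
      = (\<Sum>c\<in>I \<rightarrow>\<^sub>E {1..n}. \<Prod>i\<in>{1..n}. bern_set (R i) (F i) {j\<in>I'. \<psi> c j = i} (x \<circ> e))"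
    unfolding mb_set_def by (rule sum.reindex_bij_betw[OF b, symmetric])
  also have "\<dots> = mb_set n R F I x"
    unfolding mb_set_def
  proof (intro sum.cong refl prod.cong)
    fix c i
    have "{j\<in>I. c j = i} = e ` {j\<in>I'. \<psi> c j = i}"
      using e by (auto simp: \<psi>_def bij_betw_def)
    moreover have "inj_on e {j\<in>I'. \<psi> c j = i}"
      using e by (auto simp: bij_betw_def inj_on_def)
    ultimately show "bern_set (R i) (F i) {j\<in>I'. \<psi> c j = i} (x \<circ> e)
        = bern_set (R i) (F i) {j\<in>I. c j = i} x"
      using bern_set_image fin' by (metis (no_types, lifting) finite_subset mem_Collect_eq subsetI)
  qed
  finally show ?thesis by simp
qed

lemma mb_dens_map_distinct:
  assumes "distinct js"
  shows "mb_dens n R F (map x js) = mb_set n R F (set js) x"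
proof -
  have "mb_dens n R F (map x js) = mb_set n R F {..<length js} (x \<circ> nth js)"
    unfolding mb_dens_eq_mb_set length_map by (intro mb_set_cong) auto
  also have "\<dots> = mb_set n R F (set js) x"
    by (rule mb_set_reindex[symmetric]) (use assms bij_betw_nth in auto)
  finally show ?thesis .
qed

lemma mb_dens_permute:
  assumes "\<sigma> permutes {..<length xs}"
  shows "mb_dens n R F (map (\<lambda>j. xs ! \<sigma> j) [0..<length xs]) = mb_dens n R F xs"
proof -
  have "distinct (map \<sigma> [0..<length xs])"
    using permutes_inj[OF assms] by (simp add: distinct_map inj_on_def inj_def)
  moreover have "set (map \<sigma> [0..<length xs]) = {..<length xs}"
    using permutes_image[OF assms] by (simp add: atLeast0LessThan)
  ultimately show ?thesis
    using mb_dens_map_distinct[of "map \<sigma> [0..<length xs]" n R F "(!) xs"]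
    by (simp add: mb_dens_eq_mb_set comp_def)
qed

lemma nths_eq_map_filter: "nths xs S = map ((!) xs) (filter (\<lambda>i. i \<in> S) [0..<length xs])"
proof (induction xs arbitrary: S)
  case Nil
  then show ?case by simp
next
  case (Cons a xs)
  have "[0..<Suc (length xs)] = 0 # map Suc [0..<length xs]"
    by (subst map_Suc_upt) (simp add: upt_conv_Cons del: upt_Suc)
  then show ?case
    by (simp add: nths_Cons Cons.IH filter_map o_def del: upt_Suc)
qed

lemma mb_dens_nths:
  assumes "S \<subseteq> {..<length xs}"
  shows "mb_dens n R F (nths xs S) = mb_set n R F S (nth xs)"
proof -
  have "set (filter (\<lambda>i. i \<in> S) [0..<length xs]) = S" using assms by auto
  then show ?thesis
    unfolding nths_eq_map_filter by (metis mb_dens_map_distinct distinct_filter distinct_upt)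
qed

text \<open>An assignment of the points to n + nb components is the set S of points sent to the first
  n components together with an assignment of S and one of its complement.\<close>
definition join_assignments ::
  "nat \<Rightarrow> nat set \<Rightarrow> nat set \<Rightarrow> (nat \<Rightarrow> nat) \<times> (nat \<Rightarrow> nat) \<Rightarrow> nat \<Rightarrow> nat" where
  "join_assignments n S L p =
     (\<lambda>j. if j \<in> S then fst p j else if j \<in> L then snd p j + n else undefined)"

lemma bij_betw_join_assignments:
  assumes S: "S \<subseteq> L"
  shows "bij_betw (join_assignments n S L) ((S \<rightarrow>\<^sub>E {1..n}) \<times> ((L - S) \<rightarrow>\<^sub>E {1..nb}))
           {c \<in> L \<rightarrow>\<^sub>E {1..n + nb}. {j\<in>L. c j \<le> n} = S}"
proof (rule bij_betwI[where g = "\<lambda>c. (restrict c S, restrict (\<lambda>j. c j - n) (L - S))"])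
  show "join_assignments n S L \<in> (S \<rightarrow>\<^sub>E {1..n}) \<times> ((L - S) \<rightarrow>\<^sub>E {1..nb})
      \<rightarrow> {c \<in> L \<rightarrow>\<^sub>E {1..n + nb}. {j\<in>L. c j \<le> n} = S}"
    using S by (auto simp: join_assignments_def PiE_def Pi_def extensional_def)
  show "(\<lambda>c. (restrict c S, restrict (\<lambda>j. c j - n) (L - S)))
      \<in> {c \<in> L \<rightarrow>\<^sub>E {1..n + nb}. {j\<in>L. c j \<le> n} = S} \<rightarrow> (S \<rightarrow>\<^sub>E {1..n}) \<times> ((L - S) \<rightarrow>\<^sub>E {1..nb})"
    using S by (fastforce simp: PiE_def Pi_def extensional_def)
  fix p assume "p \<in> (S \<rightarrow>\<^sub>E {1..n}) \<times> ((L - S) \<rightarrow>\<^sub>E {1..nb})"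
  then show "(restrict (join_assignments n S L p) S,
              restrict (\<lambda>j. join_assignments n S L p j - n) (L - S)) = p"
    by (cases p) (auto simp: join_assignments_def PiE_def extensional_def fun_eq_iff)
next
  fix c assume "c \<in> {c \<in> L \<rightarrow>\<^sub>E {1..n + nb}. {j\<in>L. c j \<le> n} = S}"
  then show "join_assignments n S L (restrict c S, restrict (\<lambda>j. c j - n) (L - S)) = c"
    using S by (auto simp: join_assignments_def PiE_def Pi_def extensional_def fun_eq_iff)
qed

lemma prod_bern_set_join_assignments:
  assumes S: "S \<subseteq> L" and p: "p \<in> (S \<rightarrow>\<^sub>E {1..n}) \<times> ((L - S) \<rightarrow>\<^sub>E {1..nb})"
  shows "(\<Prod>i\<in>{1..n + nb}. bern_set (if i \<le> n then R i else Rb (i - n))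
            (if i \<le> n then F i else Fb (i - n)) {j\<in>L. join_assignments n S L p j = i} x)
       = (\<Prod>i\<in>{1..n}. bern_set (R i) (F i) {j\<in>S. fst p j = i} x) *
         (\<Prod>l\<in>{1..nb}. bern_set (Rb l) (Fb l) {j\<in>L - S. snd p j = l} x)"
proof -
  define R' where "R' = (\<lambda>i. if i \<le> n then R i else Rb (i - n))"
  define F' where "F' = (\<lambda>i. if i \<le> n then F i else Fb (i - n))"
  define G where "G i = bern_set (R' i) (F' i) {j\<in>L. join_assignments n S L p j = i} x" for i
  have "{1..n + nb} = {1..n} \<union> {n + 1..n + nb}" by auto
  then have "(\<Prod>i\<in>{1..n + nb}. G i) = (\<Prod>i\<in>{1..n}. G i) * (\<Prod>l\<in>{1..nb}. G (l + n))"
    using prod.shift_bounds_cl_nat_ivl[of G 1 n nb] by (simp add: prod.union_disjoint add.commute)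
  also have "(\<Prod>i\<in>{1..n}. G i) = (\<Prod>i\<in>{1..n}. bern_set (R i) (F i) {j\<in>S. fst p j = i} x)"
  proof (rule prod.cong[OF refl])
    fix i assume i: "i \<in> {1..n}"
    then have "{j\<in>L. join_assignments n S L p j = i} = {j\<in>S. fst p j = i}"
      using S p by (auto simp: join_assignments_def PiE_def Pi_def)
    then show "G i = bern_set (R i) (F i) {j\<in>S. fst p j = i} x"
      using i by (simp add: G_def R'_def F'_def)
  qed
  also have "(\<Prod>l\<in>{1..nb}. G (l + n)) = (\<Prod>l\<in>{1..nb}. bern_set (Rb l) (Fb l) {j\<in>L - S. snd p j = l} x)"
  proof (rule prod.cong[OF refl])
    fix l assume l: "l \<in> {1..nb}"
    then have "{j\<in>L. join_assignments n S L p j = l + n} = {j\<in>L - S. snd p j = l}"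
      using S p by (auto simp: join_assignments_def PiE_def Pi_def)
    then show "G (l + n) = bern_set (Rb l) (Fb l) {j\<in>L - S. snd p j = l} x"
      using l by (simp add: G_def R'_def F'_def)
  qed
  finally show ?thesis unfolding G_def R'_def F'_def .
qed

lemma mb_set_append_components:
  assumes fin: "finite L"
  shows "mb_set (n + nb) (\<lambda>i. if i \<le> n then R i else Rb (i - n))
           (\<lambda>i. if i \<le> n then F i else Fb (i - n)) L x
       = (\<Sum>S\<in>Pow L. mb_set nb Rb Fb (L - S) x * mb_set n R F S x)"
proof -
  define T where "T c = (\<Prod>i\<in>{1..n + nb}. bern_set (if i \<le> n then R i else Rb (i - n))
                         (if i \<le> n then F i else Fb (i - n)) {j\<in>L. c j = i} x)" for c
  have split: "(\<Sum>c\<in>{c \<in> L \<rightarrow>\<^sub>E {1..n + nb}. {j\<in>L. c j \<le> n} = S}. T c)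
      = (\<Sum>p\<in>(S \<rightarrow>\<^sub>E {1..n}) \<times> ((L - S) \<rightarrow>\<^sub>E {1..nb}).
           (\<Prod>i\<in>{1..n}. bern_set (R i) (F i) {j\<in>S. fst p j = i} x) *
           (\<Prod>l\<in>{1..nb}. bern_set (Rb l) (Fb l) {j\<in>L - S. snd p j = l} x))" if "S \<subseteq> L" for S
    unfolding sum.reindex_bij_betw[OF bij_betw_join_assignments[OF that], symmetric] T_def
    by (intro sum.cong refl prod_bern_set_join_assignments[OF that])
  have "mb_set (n + nb) (\<lambda>i. if i \<le> n then R i else Rb (i - n))
           (\<lambda>i. if i \<le> n then F i else Fb (i - n)) L x
      = (\<Sum>S\<in>Pow L. \<Sum>c\<in>{c \<in> L \<rightarrow>\<^sub>E {1..n + nb}. {j\<in>L. c j \<le> n} = S}. T c)"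
    unfolding mb_set_def T_def
    by (rule sum.group[symmetric]) (use fin in \<open>auto simp: finite_PiE\<close>)
  also have "\<dots> = (\<Sum>S\<in>Pow L. \<Sum>p\<in>(S \<rightarrow>\<^sub>E {1..n}) \<times> ((L - S) \<rightarrow>\<^sub>E {1..nb}).
      (\<Prod>i\<in>{1..n}. bern_set (R i) (F i) {j\<in>S. fst p j = i} x) *
      (\<Prod>l\<in>{1..nb}. bern_set (Rb l) (Fb l) {j\<in>L - S. snd p j = l} x))"
    by (rule sum.cong[OF refl], rule split) auto
  also have "\<dots> = (\<Sum>S\<in>Pow L. mb_set nb Rb Fb (L - S) x * mb_set n R F S x)"
    by (simp add: mb_set_def sum_product sum.cartesian_product case_prod_beta mult.commute)
  finally show ?thesis .
qed

lemma prod_bern_set_inj_on: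
  fixes n :: nat and c :: "nat \<Rightarrow> nat"
  assumes c: "c \<in> I \<rightarrow>\<^sub>E {1..n}" and inj: "inj_on c I"
  shows "(\<Prod>i\<in>{1..n}. bern_set (R i) (F i) {j\<in>I. c j = i} x)
       = (\<Prod>i\<in>{1..n} - c ` I. ennreal (1 - R i)) * (\<Prod>j\<in>I. ennreal (R (c j)) * F (c j) (x j))"
proof -
  have sub: "c ` I \<subseteq> {1..n}" using c by auto
  have "(\<Prod>i\<in>{1..n}. bern_set (R i) (F i) {j\<in>I. c j = i} x)
      = (\<Prod>i\<in>{1..n} - c ` I. bern_set (R i) (F i) {j\<in>I. c j = i} x) *
        (\<Prod>i\<in>c ` I. bern_set (R i) (F i) {j\<in>I. c j = i} x)"
    by (rule prod.subset_diff[OF sub]) simp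
  also have "(\<Prod>i\<in>{1..n} - c ` I. bern_set (R i) (F i) {j\<in>I. c j = i} x)
      = (\<Prod>i\<in>{1..n} - c ` I. ennreal (1 - R i))"
    by (rule prod.cong[OF refl]) (auto simp: bern_set_def)
  also have "(\<Prod>i\<in>c ` I. bern_set (R i) (F i) {j\<in>I. c j = i} x)
      = (\<Prod>j\<in>I. bern_set (R (c j)) (F (c j)) {j'\<in>I. c j' = c j} x)"
    by (rule prod.reindex[OF inj, unfolded comp_def])
  also have "\<dots> = (\<Prod>j\<in>I. ennreal (R (c j)) * F (c j) (x j))"
  proof (rule prod.cong[OF refl])
    fix j assume "j \<in> I"
    then have "{j'\<in>I. c j' = c j} = {j}" using inj by (auto simp: inj_on_def)
    then show "bern_set (R (c j)) (F (c j)) {j'\<in>I. c j' = c j} x = ennreal (R (c j)) * F (c j) (x j)"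
      by (simp add: bern_set_def)
  qed
  finally show ?thesis .
qed

lemma prod_bern_set_not_inj_on:
  fixes n :: nat and c :: "nat \<Rightarrow> nat"
  assumes c: "c \<in> I \<rightarrow>\<^sub>E {1..n}" and fin: "finite I" and not_inj: "\<not> inj_on c I"
  shows "(\<Prod>i\<in>{1..n}. bern_set (R i) (F i) {j\<in>I. c j = i} x) = 0"
proof -
  obtain j1 j2 where j: "j1 \<in> I" "j2 \<in> I" "j1 \<noteq> j2" "c j1 = c j2"
    using not_inj by (auto simp: inj_on_def)
  have "card {j1, j2} \<le> card {j\<in>I. c j = c j1}"
    using j fin by (intro card_mono) auto
  then have "bern_set (R (c j1)) (F (c j1)) {j\<in>I. c j = c j1} x = 0"
    using j by (auto simp: bern_set_def)
  moreover have "c j1 \<in> {1..n}" using c j by auto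
  ultimately show ?thesis by (intro prod_zero) auto
qed

lemma sum_lists_length_eq_prod:
  fixes g :: "nat \<Rightarrow> 'a \<Rightarrow> 'b::comm_semiring_1"
  assumes "finite A"
  shows "(\<Sum>xs | set xs \<subseteq> A \<and> length xs = m. \<Prod>j<m. g j (xs ! j)) = (\<Prod>j<m. \<Sum>x\<in>A. g j x)"
proof (induction m arbitrary: g)
  case 0
  have "{xs. set xs \<subseteq> A \<and> length xs = 0} = {[]}" by auto
  then show ?case by simp
next
  case (Suc m)
  define LA where "LA = {xs. set xs \<subseteq> A \<and> length xs = m}"
  have lists: "{xs. set xs \<subseteq> A \<and> length xs = Suc m} = (\<lambda>(x, xs). x # xs) ` (A \<times> LA)"
    unfolding LA_def by (auto simp: image_def length_Suc_conv)
  have inj: "inj_on (\<lambda>(x, xs). x # xs) (A \<times> LA)" by (auto simp: inj_on_def)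
  have "(\<Sum>xs | set xs \<subseteq> A \<and> length xs = Suc m. \<Prod>j<Suc m. g j (xs ! j))
      = (\<Sum>p\<in>A \<times> LA. \<Prod>j<Suc m. g j ((fst p # snd p) ! j))"
    unfolding lists by (subst sum.reindex[OF inj]) (simp add: case_prod_beta)
  also have "\<dots> = (\<Sum>x\<in>A. \<Sum>xs\<in>LA. g 0 x * (\<Prod>j<m. g (Suc j) (xs ! j)))"
    unfolding sum.cartesian_product
    by (simp add: prod.lessThan_Suc_shift case_prod_beta del: prod.lessThan_Suc)
  also have "\<dots> = (\<Sum>x\<in>A. g 0 x) * (\<Prod>j<m. \<Sum>x\<in>A. g (Suc j) x)"
    using Suc.IH[of "\<lambda>j. g (Suc j)"]
    by (simp add: LA_def sum_distrib_left[symmetric] sum_distrib_right[symmetric])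
  also have "\<dots> = (\<Prod>j<Suc m. \<Sum>x\<in>A. g j x)" by (simp only: prod.lessThan_Suc_shift)
  finally show ?case .
qed

lemma nn_integral_lists_prod:
  fixes g :: "nat \<Rightarrow> 'a \<Rightarrow> ennreal"
  assumes A: "finite A" and zero: "\<And>j x. j < m \<Longrightarrow> x \<notin> A \<Longrightarrow> g j x = 0"
  shows "(\<integral>\<^sup>+ xs. (\<Prod>j<m. g j (xs ! j)) \<partial>count_space {xs. length xs = m}) = (\<Prod>j<m. \<Sum>x\<in>A. g j x)"
proof -
  have "(\<integral>\<^sup>+ xs. (\<Prod>j<m. g j (xs ! j)) \<partial>count_space {xs. length xs = m})
      = (\<Sum>xs | set xs \<subseteq> A \<and> length xs = m. \<Prod>j<m. g j (xs ! j))"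
  proof (rule nn_integral_count_space')
    show "finite {xs. set xs \<subseteq> A \<and> length xs = m}" using finite_lists_length_eq[OF A] by simp
    fix xs assume "xs \<in> {xs. length xs = m}" "xs \<notin> {xs. set xs \<subseteq> A \<and> length xs = m}"
    then obtain j where "j < m" "xs ! j \<notin> A" by (auto simp: set_conv_nth)
    then show "(\<Prod>j<m. g j (xs ! j)) = 0" using zero by (intro prod_zero) auto
  qed auto
  then show ?thesis by (simp add: sum_lists_length_eq_prod[OF A])
qed

text \<open>Integrating a product kernel against a multi-Bernoulli density, one assignment of points
  to components at a time: only injective assignments contribute, and for those the integral
  factorises over the points.\<close>
lemma nn_integral_kernel_prod_bern_set:
  fixes K :: "'a \<Rightarrow> 'b \<Rightarrow> ennreal" and n :: nat and c :: "nat \<Rightarrow> nat"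
  assumes c: "c \<in> {..<length Ys} \<rightarrow>\<^sub>E {1..n}" and supp: "\<And>Y. finite {X. K Y X \<noteq> 0}"
  shows "(\<integral>\<^sup>+ xs. (\<Prod>j<length Ys. K (Ys ! j) (xs ! j)) *
            (\<Prod>i\<in>{1..n}. bern_set (R i) (F i) {j\<in>{..<length Ys}. c j = i} (nth xs))
          \<partial>count_space {xs. length xs = length Ys})
       = (\<Prod>i\<in>{1..n}. bern_set (R i) (\<lambda>Y. \<integral>\<^sup>+X. K Y X * F i X \<partial>count_space UNIV)
            {j\<in>{..<length Ys}. c j = i} (nth Ys))"
proof (cases "inj_on c {..<length Ys}")
  case False
  note not_inj = prod_bern_set_not_inj_on[OF c finite_lessThan False]
  show ?thesis unfolding not_inj by simp
next
  case True
  define m where "m = length Ys"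
  define A where "A = (\<Union>j<m. {X. K (Ys ! j) X \<noteq> 0})"
  define g where "g j X = K (Ys ! j) X * (ennreal (R (c j)) * F (c j) X)" for j X
  define Cst where "Cst = (\<Prod>i\<in>{1..n} - c ` {..<m}. ennreal (1 - R i))"
  have A: "finite A" unfolding A_def using supp by auto
  have "(\<integral>\<^sup>+ xs. (\<Prod>j<m. K (Ys ! j) (xs ! j)) *
            (\<Prod>i\<in>{1..n}. bern_set (R i) (F i) {j\<in>{..<m}. c j = i} (nth xs))
          \<partial>count_space {xs. length xs = m})
      = (\<integral>\<^sup>+ xs. Cst * (\<Prod>j<m. g j (xs ! j)) \<partial>count_space {xs. length xs = m})"
    unfolding prod_bern_set_inj_on[OF c True] Cst_def g_def m_def
    by (simp add: prod.distrib ac_simps)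
  also have "\<dots> = Cst * (\<Prod>j<m. \<Sum>X\<in>A. g j X)"
  proof -
    have "(\<integral>\<^sup>+ xs. (\<Prod>j<m. g j (xs ! j)) \<partial>count_space {xs. length xs = m}) = (\<Prod>j<m. \<Sum>X\<in>A. g j X)"
      by (rule nn_integral_lists_prod[OF A]) (auto simp: g_def A_def)
    then show ?thesis by (simp add: nn_integral_cmult)
  qed
  also have "\<dots> = Cst * (\<Prod>j<m. ennreal (R (c j)) * (\<integral>\<^sup>+X. K (Ys ! j) X * F (c j) X \<partial>count_space UNIV))"
  proof -
    have "(\<integral>\<^sup>+X. K (Ys ! j) X * F i X \<partial>count_space UNIV) = (\<Sum>X\<in>A. K (Ys ! j) X * F i X)"
      if "j < m" for i j
      by (rule nn_integral_count_space'[OF A]) (use that in \<open>auto simp: A_def\<close>)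
    then show ?thesis by (simp add: g_def sum_distrib_left mult.left_commute)
  qed
  also have "\<dots> = (\<Prod>i\<in>{1..n}. bern_set (R i) (\<lambda>Y. \<integral>\<^sup>+X. K Y X * F i X \<partial>count_space UNIV)
                     {j\<in>{..<m}. c j = i} (nth Ys))"
    unfolding prod_bern_set_inj_on[OF c True] Cst_def m_def by (simp add: prod.distrib)
  finally show ?thesis unfolding m_def .
qed

lemma nn_integral_kernel_mb_dens:
  fixes K :: "'a traj \<Rightarrow> 'b traj \<Rightarrow> ennreal"
  assumes "\<And>Y. finite {X. K Y X \<noteq> 0}"
  shows "(\<integral>\<^sup>+ xs. (\<Prod>j<length Ys. K (Ys ! j) (xs ! j)) * mb_dens n R F xs
            \<partial>count_space {xs. length xs = length Ys})
       = mb_dens n R (\<lambda>i Y. \<integral>\<^sup>+X. K Y X * F i X \<partial>count_space UNIV) Ys"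
proof -
  define C where "C = {..<length Ys} \<rightarrow>\<^sub>E {1..n}"
  have "(\<integral>\<^sup>+ xs. (\<Prod>j<length Ys. K (Ys ! j) (xs ! j)) * mb_dens n R F xs
            \<partial>count_space {xs. length xs = length Ys})
      = (\<integral>\<^sup>+ xs. (\<Sum>c\<in>C. (\<Prod>j<length Ys. K (Ys ! j) (xs ! j)) *
            (\<Prod>i\<in>{1..n}. bern_set (R i) (F i) {j\<in>{..<length Ys}. c j = i} (nth xs)))
          \<partial>count_space {xs. length xs = length Ys})"
    by (rule nn_integral_cong) (simp add: mb_dens_eq_mb_set mb_set_def C_def sum_distrib_left)
  also have "\<dots> = (\<Sum>c\<in>C. \<integral>\<^sup>+ xs. (\<Prod>j<length Ys. K (Ys ! j) (xs ! j)) *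
            (\<Prod>i\<in>{1..n}. bern_set (R i) (F i) {j\<in>{..<length Ys}. c j = i} (nth xs))
          \<partial>count_space {xs. length xs = length Ys})"
    by (rule nn_integral_sum) simp
  also have "\<dots> = mb_dens n R (\<lambda>i Y. \<integral>\<^sup>+X. K Y X * F i X \<partial>count_space UNIV) Ys"
    unfolding mb_dens_eq_mb_set mb_set_def C_def
    by (intro sum.cong refl nn_integral_kernel_prod_bern_set assms)
  finally show ?thesis .
qed

lemma finite_pi_coef_support: "finite {X'. ennreal (pi_coef k PS pix Y X') \<noteq> 0}"
proof (rule finite_subset)
  show "{X'. ennreal (pi_coef k PS pix Y X') \<noteq> 0}
      \<subseteq> {Traj (tbeg Y) (tend Y) (tstates Y), Traj (tbeg Y) (tend Y - 1) (butlast (tstates Y))}"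
  proof
    fix X' assume "X' \<in> {X'. ennreal (pi_coef k PS pix Y X') \<noteq> 0}"
    then show "X' \<in> {Traj (tbeg Y) (tend Y) (tstates Y), Traj (tbeg Y) (tend Y - 1) (butlast (tstates Y))}"
      by (cases X') (auto simp: pi_coef_def split: if_splits)
  qed
qed simp

lemma nn_integral_surv_trans_mb_dens:
  "(\<integral>\<^sup>+Xs'. surv_trans k PS pix Ys Xs' * mb_dens n R F Xs' \<partial>count_space {Xs'. length Xs' = m})
   = (if length Ys = m then of_nat (fact m) * mb_dens n R (\<lambda>i. traj_pred k PS pix (F i)) Ys else 0)"
proof (cases "length Ys = m")
  case False
  have "surv_trans k PS pix Ys Xs' = 0" if "Xs' \<in> {Xs'. length Xs' = m}" for Xs'
    using False that by (simp add: surv_trans_def)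
  then show ?thesis using False by (simp cong: nn_integral_cong_simp)
next
  case True
  define Perm where "Perm = {\<sigma>. \<sigma> permutes {..<m}}"
  define K where "K Y X = ennreal (pi_coef k PS pix Y X)" for Y X :: "'a traj"
  have "(\<integral>\<^sup>+Xs'. surv_trans k PS pix Ys Xs' * mb_dens n R F Xs' \<partial>count_space {Xs'. length Xs' = m})
      = (\<Sum>\<sigma>\<in>Perm. \<integral>\<^sup>+Xs'. (\<Prod>j<m. K (Ys ! \<sigma> j) (Xs' ! j)) * mb_dens n R F Xs'
           \<partial>count_space {Xs'. length Xs' = m})"
  proof -
    have "surv_trans k PS pix Ys Xs' * mb_dens n R F Xs'
        = (\<Sum>\<sigma>\<in>Perm. (\<Prod>j<m. K (Ys ! \<sigma> j) (Xs' ! j)) * mb_dens n R F Xs')"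
      if "Xs' \<in> {Xs'. length Xs' = m}" for Xs'
      using True that by (simp add: surv_trans_def Perm_def K_def sum_distrib_right)
    then show ?thesis by (simp add: nn_integral_sum cong: nn_integral_cong_simp)
  qed
  also have "\<dots> = (\<Sum>\<sigma>\<in>Perm. mb_dens n R (\<lambda>i. traj_pred k PS pix (F i)) Ys)"
  proof (rule sum.cong[OF refl])
    fix \<sigma> assume \<sigma>: "\<sigma> \<in> Perm"
    define Ys\<sigma> where "Ys\<sigma> = map (\<lambda>j. Ys ! \<sigma> j) [0..<m]"
    have "(\<integral>\<^sup>+Xs'. (\<Prod>j<m. K (Ys ! \<sigma> j) (Xs' ! j)) * mb_dens n R F Xs'
           \<partial>count_space {Xs'. length Xs' = m})
        = (\<integral>\<^sup>+Xs'. (\<Prod>j<length Ys\<sigma>. K (Ys\<sigma> ! j) (Xs' ! j)) * mb_dens n R F Xs'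
           \<partial>count_space {Xs'. length Xs' = length Ys\<sigma>})"
      by (simp add: Ys\<sigma>_def)
    also have "\<dots> = mb_dens n R (\<lambda>i. traj_pred k PS pix (F i)) Ys\<sigma>"
      unfolding traj_pred_def K_def by (rule nn_integral_kernel_mb_dens[OF finite_pi_coef_support])
    also have "\<dots> = mb_dens n R (\<lambda>i. traj_pred k PS pix (F i)) Ys"
      using \<sigma> True mb_dens_permute[of \<sigma> Ys] by (simp add: Perm_def Ys\<sigma>_def)
    finally show "(\<integral>\<^sup>+Xs'. (\<Prod>j<m. K (Ys ! \<sigma> j) (Xs' ! j)) * mb_dens n R F Xs'
           \<partial>count_space {Xs'. length Xs' = m}) = mb_dens n R (\<lambda>i. traj_pred k PS pix (F i)) Ys" .
  qed
  also have "\<dots> = of_nat (fact m) * mb_dens n R (\<lambda>i. traj_pred k PS pix (F i)) Ys"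
    using card_permutations[of "{..<m}" m] by (simp add: Perm_def)
  finally show ?thesis using True by simp
qed

lemma nn_integral_surv_trans_mbm_dens:
  "(\<integral>\<^sup>+Xs'. surv_trans k PS pix Ys Xs' * mbm_dens n h w r f M Xs' \<partial>count_space {Xs'. length Xs' = m})
   = (if length Ys = m
      then of_nat (fact m) * mbm_dens n h w r (\<lambda>i a. traj_pred k PS pix (f i a)) M Ys else 0)"
proof -
  have "(\<integral>\<^sup>+Xs'. surv_trans k PS pix Ys Xs' * mbm_dens n h w r f M Xs' \<partial>count_space {Xs'. length Xs' = m})
      = (\<integral>\<^sup>+Xs'. (\<Sum>a\<in>glob_hyps n h M. ennreal (glob_weight n h w M a) *
           (surv_trans k PS pix Ys Xs' * mb_dens n (\<lambda>i. r i (a i)) (\<lambda>i. f i (a i)) Xs'))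
         \<partial>count_space {Xs'. length Xs' = m})"
    by (simp add: mbm_dens_def sum_distrib_left mult.left_commute)
  also have "\<dots> = (\<Sum>a\<in>glob_hyps n h M. ennreal (glob_weight n h w M a) *
           (\<integral>\<^sup>+Xs'. surv_trans k PS pix Ys Xs' * mb_dens n (\<lambda>i. r i (a i)) (\<lambda>i. f i (a i)) Xs'
             \<partial>count_space {Xs'. length Xs' = m}))"
    by (simp add: nn_integral_sum nn_integral_cmult)
  finally show ?thesis
    by (simp add: nn_integral_surv_trans_mb_dens mbm_dens_def sum_distrib_left mult.left_commute)
qed

text \<open>Each set S of surviving points contributes only to the m = |S| term of the set integral,
  where its m! cancels the 1/m!.\<close>
lemma ck_pred_eq_sum_splits:
  assumes surv: "\<And>Ys m. (\<integral>\<^sup>+Xs'. surv_trans k PS pix Ys Xs' * fprev Xs' \<partial>count_space {Xs'. length Xs' = m})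
                        = (if length Ys = m then of_nat (fact m) * g Ys else 0)"
  shows "ck_pred k PS pix fbirth fprev Xs
       = (\<Sum>S\<in>Pow {..<length Xs}. fbirth (nths Xs ({..<length Xs} - S)) * g (nths Xs S))"
proof -
  define L where "L = {..<length Xs}"
  define contrib where "contrib S = fbirth (nths Xs (L - S)) * g (nths Xs S)" for S
  have length_nths: "length (nths Xs S) = card S" if "S \<in> Pow L" for S
  proof -
    have "{i. i < length Xs \<and> i \<in> S} = S" using that by (auto simp: L_def)
    then show ?thesis by (simp add: length_nths)
  qed
  have "ennreal (1 / fact m) * (\<integral>\<^sup>+Xs'. set_trans k PS pix fbirth Xs Xs' * fprev Xs'
            \<partial>count_space {Xs'. length Xs' = m})
        = (\<Sum>S\<in>Pow L. if card S = m then contrib S else 0)" for m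
  proof -
    have "(\<integral>\<^sup>+Xs'. set_trans k PS pix fbirth Xs Xs' * fprev Xs' \<partial>count_space {Xs'. length Xs' = m})
        = (\<Sum>S\<in>Pow L. fbirth (nths Xs (L - S)) *
             (\<integral>\<^sup>+Xs'. surv_trans k PS pix (nths Xs S) Xs' * fprev Xs' \<partial>count_space {Xs'. length Xs' = m}))"
      by (simp add: set_trans_def L_def sum_distrib_right mult.assoc nn_integral_sum nn_integral_cmult)
    also have "\<dots> = (\<Sum>S\<in>Pow L. of_nat (fact m) * (if card S = m then contrib S else 0))"
      by (intro sum.cong refl) (simp add: surv length_nths contrib_def mult.left_commute)
    finally show ?thesis
      by (simp add: sum_distrib_left mult.assoc[symmetric] ennreal_of_nat_eq_real_of_nat
                    ennreal_mult'[symmetric])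
  qed
  then have "ck_pred k PS pix fbirth fprev Xs = (\<Sum>m. \<Sum>S\<in>Pow L. if card S = m then contrib S else 0)"
    by (simp add: ck_pred_def set_int_dirac_def)
  also have "\<dots> = (\<Sum>S\<in>Pow L. \<Sum>m. if card S = m then contrib S else 0)"
    by (rule suminf_sum) (rule summableI)
  also have "\<dots> = (\<Sum>S\<in>Pow L. contrib S)"
  proof (rule sum.cong[OF refl])
    fix S
    show "(\<Sum>m. if card S = m then contrib S else 0) = contrib S"
      using sums_single[of "card S" "\<lambda>_. contrib S"] by (simp add: sums_iff eq_commute)
  qed
  finally show ?thesis unfolding contrib_def L_def .
qed

definition extend_hyp :: "nat \<Rightarrow> nat \<Rightarrow> (nat \<Rightarrow> nat) \<Rightarrow> nat \<Rightarrow> nat" where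
  "extend_hyp n nb a = (\<lambda>i. if i \<le> n then a i else if i \<le> n + nb then 1 else undefined)"

lemma glob_hyps_append_tracks:
  "glob_hyps (n + nb) (\<lambda>i. if i \<le> n then h i else 1) (\<lambda>i a. if i \<le> n then M i a else {})
     = extend_hyp n nb ` glob_hyps n h M"
proof
  show "extend_hyp n nb ` glob_hyps n h M
      \<subseteq> glob_hyps (n + nb) (\<lambda>i. if i \<le> n then h i else 1) (\<lambda>i a. if i \<le> n then M i a else {})"
  proof
    fix a' assume "a' \<in> extend_hyp n nb ` glob_hyps n h M"
    then obtain a where a: "a \<in> glob_hyps n h M" and a': "a' = extend_hyp n nb a" by auto
    then have "a' \<in> Pi\<^sub>E {1..n + nb} (\<lambda>i. {1..(if i \<le> n then h i else 1)})"
      by (auto simp: glob_hyps_def extend_hyp_def PiE_def Pi_def extensional_def)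
    moreover have "\<forall>i\<in>{1..n + nb}. \<forall>j\<in>{1..n + nb}. i \<noteq> j \<longrightarrow>
        (if i \<le> n then M i (a' i) else {}) \<inter> (if j \<le> n then M j (a' j) else {}) = {}"
      using a unfolding a' extend_hyp_def glob_hyps_def by auto
    ultimately show "a' \<in> glob_hyps (n + nb) (\<lambda>i. if i \<le> n then h i else 1)
                            (\<lambda>i a. if i \<le> n then M i a else {})"
      by (simp add: glob_hyps_def)
  qed
next
  show "glob_hyps (n + nb) (\<lambda>i. if i \<le> n then h i else 1) (\<lambda>i a. if i \<le> n then M i a else {})
      \<subseteq> extend_hyp n nb ` glob_hyps n h M"
  proof
    fix a' assume a': "a' \<in> glob_hyps (n + nb) (\<lambda>i. if i \<le> n then h i else 1)
                              (\<lambda>i a. if i \<le> n then M i a else {})"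
    then have Pi: "a' \<in> Pi\<^sub>E {1..n + nb} (\<lambda>i. {1..(if i \<le> n then h i else 1)})"
      by (simp add: glob_hyps_def)
    have "restrict a' {1..n} \<in> glob_hyps n h M"
    proof -
      have "M i (a' i) \<inter> M j (a' j) = {}" if "i \<in> {1..n}" "j \<in> {1..n}" "i \<noteq> j" for i j
        using a' that unfolding glob_hyps_def by fastforce
      then show ?thesis using Pi by (auto simp: glob_hyps_def PiE_def Pi_def extensional_def)
    qed
    moreover have "a' = extend_hyp n nb (restrict a' {1..n})"
    proof
      fix i
      show "a' i = extend_hyp n nb (restrict a' {1..n}) i"
      proof (cases "i \<in> {1..n + nb}")
        case True
        then show ?thesis using PiE_mem[OF Pi True] by (auto simp: extend_hyp_def)
      next
        case False
        then show ?thesis using Pi by (auto simp: extend_hyp_def PiE_def extensional_def)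
      qed
    qed
    ultimately show "a' \<in> extend_hyp n nb ` glob_hyps n h M" by blast
  qed
qed

lemma inj_on_extend_hyp: "inj_on (extend_hyp n nb) (glob_hyps n h M)"
proof
  fix a b assume a: "a \<in> glob_hyps n h M" and b: "b \<in> glob_hyps n h M"
    and eq: "extend_hyp n nb a = extend_hyp n nb b"
  show "a = b"
  proof
    fix i
    show "a i = b i"
    proof (cases "i \<in> {1..n}")
      case True
      then show ?thesis using fun_cong[OF eq, of i] by (simp add: extend_hyp_def)
    next
      case False
      then show ?thesis using a b by (auto simp: glob_hyps_def PiE_def extensional_def)
    qed
  qed
qed

lemma glob_weight_extend_hyp:
  assumes "a \<in> glob_hyps n h M"
  shows "glob_weight (n + nb) (\<lambda>i. if i \<le> n then h i else 1) (\<lambda>i a. if i \<le> n then w i a else 1)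
           (\<lambda>i a. if i \<le> n then M i a else {}) (extend_hyp n nb a) = glob_weight n h w M a"
proof -
  have prod_extend: "(\<Prod>i\<in>{1..n + nb}. if i \<le> n then w i (extend_hyp n nb b i) else 1)
      = (\<Prod>i\<in>{1..n}. w i (b i))" for b
    by (rule prod.mono_neutral_cong_right) (auto simp: extend_hyp_def)
  have "(\<Sum>b\<in>glob_hyps (n + nb) (\<lambda>i. if i \<le> n then h i else 1) (\<lambda>i a. if i \<le> n then M i a else {}).
           \<Prod>i\<in>{1..n + nb}. if i \<le> n then w i (b i) else 1)
      = (\<Sum>b\<in>glob_hyps n h M. \<Prod>i\<in>{1..n}. w i (b i))"
    unfolding glob_hyps_append_tracks sum.reindex[OF inj_on_extend_hyp] comp_def prod_extend ..
  then show ?thesis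
    unfolding glob_weight_def using prod_extend[of a] by (simp add: if_distrib cong: if_cong)
qed

lemma mbm_dens_append_components:
  "mbm_dens (n + nb) (\<lambda>i. if i \<le> n then h i else 1) (\<lambda>i a. if i \<le> n then w i a else 1)
     (\<lambda>i a. if i \<le> n then r i a else Rb (i - n)) (\<lambda>i a. if i \<le> n then f i a else Fb (i - n))
     (\<lambda>i a. if i \<le> n then M i a else {}) Xs
   = (\<Sum>S\<in>Pow {..<length Xs}.
        mb_dens nb Rb Fb (nths Xs ({..<length Xs} - S)) * mbm_dens n h w r f M (nths Xs S))"
proof -
  define L where "L = {..<length Xs}"
  have mb_extend: "mb_dens (n + nb) (\<lambda>i. if i \<le> n then r i (extend_hyp n nb a i) else Rb (i - n))
        (\<lambda>i. if i \<le> n then f i (extend_hyp n nb a i) else Fb (i - n)) Xs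
      = (\<Sum>S\<in>Pow L. mb_dens nb Rb Fb (nths Xs (L - S)) *
           mb_dens n (\<lambda>i. r i (a i)) (\<lambda>i. f i (a i)) (nths Xs S))" for a
  proof -
    have "mb_dens (n + nb) (\<lambda>i. if i \<le> n then r i (extend_hyp n nb a i) else Rb (i - n))
        (\<lambda>i. if i \<le> n then f i (extend_hyp n nb a i) else Fb (i - n)) Xs
      = mb_set (n + nb) (\<lambda>i. if i \<le> n then r i (a i) else Rb (i - n))
          (\<lambda>i. if i \<le> n then f i (a i) else Fb (i - n)) L (nth Xs)"
      unfolding mb_dens_eq_mb_set L_def by (rule mb_set_cong) (auto simp: extend_hyp_def)
    also have "\<dots> = (\<Sum>S\<in>Pow L. mb_set nb Rb Fb (L - S) (nth Xs) *
                       mb_set n (\<lambda>i. r i (a i)) (\<lambda>i. f i (a i)) S (nth Xs))"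
      by (rule mb_set_append_components) (simp add: L_def)
    also have "\<dots> = (\<Sum>S\<in>Pow L. mb_dens nb Rb Fb (nths Xs (L - S)) *
                       mb_dens n (\<lambda>i. r i (a i)) (\<lambda>i. f i (a i)) (nths Xs S))"
      by (intro sum.cong refl arg_cong2[where f = "(*)"] mb_dens_nths[symmetric]) (auto simp: L_def)
    finally show ?thesis .
  qed
  have "mbm_dens (n + nb) (\<lambda>i. if i \<le> n then h i else 1) (\<lambda>i a. if i \<le> n then w i a else 1)
     (\<lambda>i a. if i \<le> n then r i a else Rb (i - n)) (\<lambda>i a. if i \<le> n then f i a else Fb (i - n))
     (\<lambda>i a. if i \<le> n then M i a else {}) Xs
      = (\<Sum>a\<in>glob_hyps n h M. ennreal (glob_weight n h w M a) *
           (\<Sum>S\<in>Pow L. mb_dens nb Rb Fb (nths Xs (L - S)) *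
              mb_dens n (\<lambda>i. r i (a i)) (\<lambda>i. f i (a i)) (nths Xs S)))"
    unfolding mbm_dens_def glob_hyps_append_tracks
    by (subst sum.reindex[OF inj_on_extend_hyp])
       (simp add: glob_weight_extend_hyp mb_extend[symmetric] if_distrib cong: sum.cong)
  also have "\<dots> = (\<Sum>S\<in>Pow L. mb_dens nb Rb Fb (nths Xs (L - S)) * mbm_dens n h w r f M (nths Xs S))"
    unfolding mbm_dens_def sum_distrib_left by (subst sum.swap) (simp add: mult.left_commute)
  finally show ?thesis unfolding L_def .
qed

text \<open>The identity is purely combinatorial.\<close>
theorem theorem2:
  fixes k n nb :: nat
    and h :: "nat \<Rightarrow> nat"
    and w r :: "nat \<Rightarrow> nat \<Rightarrow> real"
    and f :: "nat \<Rightarrow> nat \<Rightarrow> (real ^ 'd) traj \<Rightarrow> ennreal"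
    and M :: "nat \<Rightarrow> nat \<Rightarrow> (nat \<times> nat) set"
    and rb :: "nat \<Rightarrow> real"
    and fb :: "nat \<Rightarrow> real ^ 'd \<Rightarrow> ennreal"
    and PS :: "real ^ 'd \<Rightarrow> real"
    and pix :: "real ^ 'd \<Rightarrow> real ^ 'd \<Rightarrow> real"
  assumes "k \<ge> 1"
    and "\<And>i a. 0 \<le> w i a"
    and "\<And>i a. 0 \<le> r i a \<and> r i a \<le> 1"
    and "\<And>i a X. X \<notin> traj_space (k - 1) \<Longrightarrow> f i a X = 0"
    and "\<And>i a \<tau> j j'. (\<tau>, j) \<in> M i a \<Longrightarrow> (\<tau>, j') \<in> M i a \<Longrightarrow> j = j'"
    and "\<And>l. 0 \<le> rb l \<and> rb l \<le> 1"
    and "\<And>x. 0 \<le> PS x \<and> PS x \<le> 1"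
    and "\<And>x x'. 0 \<le> pix x x'"
  shows
   "(\<forall>Xs. set Xs \<subseteq> traj_space k \<longrightarrow>
       ck_pred k PS pix (mb_dens nb rb (\<lambda>l. birth_traj k (fb l))) (mbm_dens n h w r f M) Xs =
       mbm_dens (n + nb)
         (\<lambda>i. if i \<le> n then h i else 1)
         (\<lambda>i a. if i \<le> n then w i a else 1)
         (\<lambda>i a. if i \<le> n then r i a else rb (i - n))
         (\<lambda>i a. if i \<le> n then traj_pred k PS pix (f i a) else birth_traj k (fb (i - n)))
         (\<lambda>i a. if i \<le> n then M i a else {})
         Xs)
    \<and> glob_hyps (n + nb) (\<lambda>i. if i \<le> n then h i else 1) (\<lambda>i a. if i \<le> n then M i a else {})
       = (\<lambda>a i. if i \<le> n then a i else if i \<le> n + nb then 1 else undefined) ` glob_hyps n h M"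
  unfolding ck_pred_eq_sum_splits[OF nn_integral_surv_trans_mbm_dens]
    mbm_dens_append_components[where f = "\<lambda>i a. traj_pred k PS pix (f i a)"
      and Fb = "\<lambda>l. birth_traj k (fb l)"]
    glob_hyps_append_tracks[unfolded extend_hyp_def]
  by simp

end
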